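(* Fix an integer $k\ge1$, let $\Delta_k:=\log(1/2)/\log(1-2^{-k})$ and fix $\Delta>\Delta_k$. For $n\ge k$ let $m=\lceil\Delta N_k\rceil$ and let the data $(\ell_j,\varepsilon_j)_{j\in[m]}$ be i.i.d., where $\ell_j=(\ell_{j,1},\dots,\ell_{j,k})$ is a uniformly random $k$-tuple of linearly independent linear forms on $\mathbb{F}_2^n$ and $\varepsilon_j\in\mathbb{F}_2^k$ is uniform and independent of $\ell_j$ (so that the flats $V_j=\{x:\ell_{j,i}(x)=\varepsilon_{j,i}\ \forall i\}$ satisfy $V\sim\mathbf{P}_{\text{unif}}$). Then the probability that the linear system $(\mathcal{L}_V)$ has a solution in $\mathbb{F}_2^{N_k}$ tends to $0$ as $n\to\infty$.
   Context: Let $N_k=\sum_{i=0}^k\binom{n}{i}$ and index the coordinates of $\mathbb{F}_2^{N_k}$ by subsets $S\subseteq[n]$ with $|S|\le k$. For linear forms $\ell_1,\dots,\ell_k$ on $\mathbb{F}_2^n$ and $\alpha\in\mathbb{F}_2^k$, expand $P_{\ell,\alpha}(x)=\prod_{i=1}^k(\ell_i(x)+\alpha_i)$ in $\mathbb{F}_2[x_1,\dots,x_n]$ and reduce using $x_s^2=x_s$, obtaining $\sum_{|S|\le k}c_S(\ell,\alpha)\prod_{s\in S}x_s$; define the linear form $\mathcal{L}_{\ell,\alpha}(Y)=\sum_{|S|\le k}c_S(\ell,\alpha)Y_S$ on $\mathbb{F}_2^{N_k}$. Given data $(\ell_j,\varepsilon_j)_{j\in[m]}$ describing flats $V_j$,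 with $\alpha_j:=(1-\varepsilon_{j,i})_{i\in[k]}$, the system $(\mathcal{L}_V)$ is the system of $m+1$ linear equations in $Y\in\mathbb{F}_2^{N_k}$: $\mathcal{L}_{\ell_j,\alpha_j}(Y)=0$ for all $j\in[m]$, and $Y_\emptyset=1$. $\mathbf{P}_{\text{unif}}$ is the law of $m$ i.i.d. uniform affine subspaces of $\mathbb{F}_2^n$ of dimension $n-k$. *)

theory Defs
  imports "HOL-Probability.Probability"
begin

text \<open>A vector of F_2^n (a point, or a linear form) is encoded by its support,
a subset of {..<n}.
Elements of F_2 are booleans (True = 1). A k-tuple of linear forms is a function
nat \<Rightarrow> nat set, extensional (empty) outside {..<k}; similarly for vectors in F_2^k.\<close>

definition lin_form :: "nat set \<Rightarrow> nat set \<Rightarrow> bool" where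
  "lin_form L x = odd (card (L \<inter> x))"

definition lin_indep_forms :: "nat \<Rightarrow> nat \<Rightarrow> (nat \<Rightarrow> nat set) \<Rightarrow> bool" where
  "lin_indep_forms n k L \<longleftrightarrow>
     (\<forall>I \<subseteq> {..<k}. I \<noteq> {} \<longrightarrow> (\<exists>s<n. odd (card {i\<in>I. s \<in> L i})))"

definition flat_data :: "nat \<Rightarrow> nat \<Rightarrow> ((nat \<Rightarrow> nat set) \<times> (nat \<Rightarrow> bool)) set" where
  "flat_data n k = {(L, eps).
      (\<forall>i<k. L i \<subseteq> {..<n}) \<and> (\<forall>i\<ge>k. L i = {}) \<and> lin_indep_forms n k L \<and>
      (\<forall>i\<ge>k. eps i = False)}"

text \<open>Expanding \<Prod>i<k. (\<Sum>s\<in>L i. x_s + \<alpha> i) by distributivity: each term picks, for every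
factor i, either the constant \<alpha> i (None) or a variable x_s with s \<in> L i (Some s).
After reducing x_s^2 = x_s, the term is the monomial \<Prod>{x_s | s chosen} times the product
of the chosen constants.\<close>
definition expansion_choices :: "nat \<Rightarrow> (nat \<Rightarrow> nat set) \<Rightarrow> (nat \<Rightarrow> nat option) set" where
  "expansion_choices k L = {\<sigma>. (\<forall>i<k. \<sigma> i = None \<or> (\<exists>s\<in>L i. \<sigma> i = Some s)) \<and>
                                (\<forall>i\<ge>k. \<sigma> i = None)}"

definition coef :: "nat \<Rightarrow> (nat \<Rightarrow> nat set) \<Rightarrow> (nat \<Rightarrow> bool) \<Rightarrow> nat set \<Rightarrow> bool" where
  "coef k L \<alpha> S = odd (card {\<sigma> \<in> expansion_choices k L.
       (\<forall>i<k. \<sigma> i = None \<longrightarrow> \<alpha> i) \<and> {s. \<exists>i<k. \<sigma> i = Some s} = S})"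

definition monomial_index :: "nat \<Rightarrow> nat \<Rightarrow> nat set set" where
  "monomial_index n k = {S. S \<subseteq> {..<n} \<and> card S \<le> k}"

definition Nk :: "nat \<Rightarrow> nat \<Rightarrow> nat" where
  "Nk n k = (\<Sum>i\<le>k. n choose i)"

definition lin_functional :: "nat \<Rightarrow> nat \<Rightarrow> (nat \<Rightarrow> nat set) \<Rightarrow> (nat \<Rightarrow> bool) \<Rightarrow> (nat set \<Rightarrow> bool) \<Rightarrow> bool" where
  "lin_functional n k L \<alpha> Y = odd (card {S \<in> monomial_index n k. coef k L \<alpha> S \<and> Y S})"

text \<open>Solvability of the system (\<L>_V) for data d, with \<alpha>_j = 1 - \<epsilon>_j.\<close>
definition system_solvable :: "nat \<Rightarrow> nat \<Rightarrow> nat \<Rightarrow> (nat \<Rightarrow> (nat \<Rightarrow> nat set) \<times> (nat \<Rightarrow> bool)) \<Rightarrow> bool" where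
  "system_solvable n k m d \<longleftrightarrow>
     (\<exists>Y :: nat set \<Rightarrow> bool. Y {} \<and>
        (\<forall>j<m. \<not> lin_functional n k (fst (d j)) (\<lambda>i. \<not> snd (d j) i) Y))"

definition data_pmf :: "nat \<Rightarrow> nat \<Rightarrow> nat \<Rightarrow> (nat \<Rightarrow> (nat \<Rightarrow> nat set) \<times> (nat \<Rightarrow> bool)) pmf" where
  "data_pmf n k m = Pi_pmf {..<m} (\<lambda>_. {}, \<lambda>_. False) (\<lambda>_. pmf_of_set (flat_data n k))"

end

theory Submission
  imports Defs
begin

text \<open>For linearly independent forms \<open>\<ell>\<close> the \<open>2^k\<close> flats \<open>\<ell> = \<epsilon>\<close> partition \<open>F\<^sub>2\<^sup>n\<close>,
so \<open>\<Sum>\<^sub>\<alpha> P\<^bsub>\<ell>,\<alpha>\<^esub> = 1\<close> as a multilinear polynomial. Comparing coefficients, for every \<open>Y\<close> with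
\<open>Y\<^sub>\<emptyset> = 1\<close> the values \<open>\<L>\<^bsub>\<ell>,\<alpha>\<^esub>(Y)\<close> sum to \<open>1\<close> over \<open>\<alpha>\<close>. Hence some choice of \<open>\<epsilon>\<close>
violates the equation of \<open>Y\<close>, and one random equation is satisfied by \<open>Y\<close> with probability at
most \<open>1 - 2^-k\<close>. A union bound over the \<open>2^N\<^sub>k\<close> candidate solutions gives
\<open>P(solvable) \<le> 2^N\<^sub>k (1 - 2^-k)^m \<le> exp((ln 2 + \<Delta> ln(1 - 2^-k)) N\<^sub>k)\<close>; the exponent is
negative precisely because \<open>\<Delta> > \<Delta>\<^sub>k\<close>, and \<open>N\<^sub>k \<ge> n\<close>.\<close>

lemma odd_card_filter_odd_iff:
  fixes f :: "'a \<Rightarrow> nat"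
  assumes "finite A"
  shows "odd (card {x\<in>A. odd (f x)}) \<longleftrightarrow> odd (\<Sum>x\<in>A. f x)"
proof -
  have "card {x\<in>A. odd (f x)} = (\<Sum>x\<in>A. of_bool (odd (f x)))"
    using assms by (simp add: Int_def)
  also have "\<dots> = (\<Sum>x\<in>A. f x mod 2)"
    by (simp only: of_bool_odd_eq_mod_2)
  finally show ?thesis
    by (simp only: odd_iff_mod_2_eq_one mod_sum_eq)
qed

lemma odd_card_filter_odd_card_swap:
  fixes P :: "'a \<Rightarrow> 'b \<Rightarrow> bool"
  assumes "finite A" "finite B"
  shows "odd (card {x\<in>A. odd (card {y\<in>B. P x y})}) \<longleftrightarrow>
         odd (card {y\<in>B. odd (card {x\<in>A. P x y})})"
proof -
  have card_filter: "card {x\<in>C. Q x} = (\<Sum>x\<in>C. of_bool (Q x) :: nat)"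
    if "finite C" for C and Q :: "'c \<Rightarrow> bool"
    using that by (simp add: Int_def)
  have "(\<Sum>x\<in>A. card {y\<in>B. P x y}) = (\<Sum>x\<in>A. \<Sum>y\<in>B. of_bool (P x y))"
    using assms by (simp add: card_filter)
  also have "\<dots> = (\<Sum>y\<in>B. \<Sum>x\<in>A. of_bool (P x y))"
    by (rule sum.swap)
  also have "\<dots> = (\<Sum>y\<in>B. card {x\<in>A. P x y})"
    using assms by (simp add: card_filter)
  finally show ?thesis
    using assms by (simp add: odd_card_filter_odd_iff)
qed

definition sign_vectors :: "nat \<Rightarrow> (nat \<Rightarrow> bool) set" where
  "sign_vectors k = {eps. \<forall>i\<ge>k. \<not> eps i}"

lemma sign_vectors_eq_image_Pow: "sign_vectors k = (\<lambda>T i. i \<in> T) ` Pow {..<k}"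
proof (intro equalityI subsetI)
  fix eps assume "eps \<in> sign_vectors k"
  then have "eps = (\<lambda>i. i \<in> {i. i < k \<and> eps i})"
    by (auto simp: sign_vectors_def fun_eq_iff) (meson not_less)
  then show "eps \<in> (\<lambda>T i. i \<in> T) ` Pow {..<k}"
    by blast
qed (auto simp: sign_vectors_def)

lemma finite_sign_vectors: "finite (sign_vectors k)"
  by (simp add: sign_vectors_eq_image_Pow)

lemma card_sign_vectors: "card (sign_vectors k) = 2 ^ k"
proof -
  have "inj_on (\<lambda>T i. i \<in> T) (Pow {..<k::nat})"
    by (rule inj_onI) (simp add: fun_eq_iff set_eq_iff)
  then show ?thesis
    by (simp add: sign_vectors_eq_image_Pow card_image card_Pow)
qed

lemma odd_card_sign_vectors_vanishing:
  "odd (card {eps\<in>sign_vectors k. \<forall>i<k. P i \<longrightarrow> \<not> eps i}) \<longleftrightarrow> (\<forall>i<k. P i)"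
proof (cases "\<forall>i<k. P i")
  case True
  then have "{eps\<in>sign_vectors k. \<forall>i<k. P i \<longrightarrow> \<not> eps i} = {\<lambda>_. False}"
    by (auto simp: sign_vectors_def fun_eq_iff) (metis not_less)
  with True show ?thesis
    by simp
next
  case False
  then obtain i0 where i0: "i0 < k" "\<not> P i0"
    by blast
  define A where "A = {eps\<in>sign_vectors k. \<forall>i<k. P i \<longrightarrow> \<not> eps i}"
  define flip where "flip = (\<lambda>eps :: nat \<Rightarrow> bool. eps(i0 := \<not> eps i0))"
  have "bij_betw flip {eps\<in>A. \<not> eps i0} {eps\<in>A. eps i0}"
    by (rule bij_betwI[where g = flip])
      (use i0 in \<open>auto simp: A_def flip_def sign_vectors_def fun_upd_idem_iff\<close>)
  then have "card {eps\<in>A. \<not> eps i0} = card {eps\<in>A. eps i0}"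
    by (rule bij_betw_same_card)
  moreover have "card A = card {eps\<in>A. \<not> eps i0} + card {eps\<in>A. eps i0}"
    using finite_sign_vectors[of k]
    by (subst card_Un_disjoint[symmetric]) (auto simp: A_def intro: arg_cong[where f = card])
  ultimately show ?thesis
    using False by (simp add: A_def)
qed

lemma finite_expansion_choices:
  assumes "\<forall>i<k. finite (L i)"
  shows "finite (expansion_choices k L)"
proof -
  let ?extend = "\<lambda>g i. if i < k then g i else None"
  have "expansion_choices k L \<subseteq> ?extend ` (PiE {..<k} (\<lambda>i. insert None (Some ` L i)))"
  proof
    fix \<sigma> assume \<sigma>: "\<sigma> \<in> expansion_choices k L"
    then have "\<sigma> = ?extend (restrict \<sigma> {..<k})"
      by (auto simp: expansion_choices_def fun_eq_iff not_less)
    moreover have "restrict \<sigma> {..<k} \<in> PiE {..<k} (\<lambda>i. insert None (Some ` L i))"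
      using \<sigma> by (auto simp: expansion_choices_def)
    ultimately show "\<sigma> \<in> ?extend ` (PiE {..<k} (\<lambda>i. insert None (Some ` L i)))"
      by blast
  qed
  then show ?thesis
    by (rule finite_subset) (auto intro!: finite_PiE simp: assms)
qed

text \<open>An expansion term that picks a variable in factor \<open>i\<close> is counted for an even number of
sign vectors (flip \<open>\<epsilon>\<^sub>i\<close>), so only the all-constant term, with monomial \<open>\<emptyset>\<close>, survives.\<close>

lemma odd_card_sign_vectors_coef:
  assumes "\<forall>i<k. finite (L i)"
  shows "odd (card {eps\<in>sign_vectors k. coef k L (\<lambda>i. \<not> eps i) S}) \<longleftrightarrow> S = {}"
proof -
  define img where "img = (\<lambda>\<sigma> :: nat \<Rightarrow> nat option. {s. \<exists>i<k. \<sigma> i = Some s})"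
  define Q where "Q = (\<lambda>eps \<sigma>. (\<forall>i<k. \<sigma> i = None \<longrightarrow> \<not> eps i) \<and> img \<sigma> = S)"
  have fin: "finite (expansion_choices k L)"
    using assms by (rule finite_expansion_choices)
  have "coef k L (\<lambda>i. \<not> eps i) S \<longleftrightarrow> odd (card {\<sigma>\<in>expansion_choices k L. Q eps \<sigma>})" for eps
    by (simp add: coef_def Q_def img_def)
  then have "odd (card {eps\<in>sign_vectors k. coef k L (\<lambda>i. \<not> eps i) S})
      \<longleftrightarrow> odd (card {\<sigma>\<in>expansion_choices k L. odd (card {eps\<in>sign_vectors k. Q eps \<sigma>})})"
    using odd_card_filter_odd_card_swap[OF finite_sign_vectors fin] by simp
  also have "{\<sigma>\<in>expansion_choices k L. odd (card {eps\<in>sign_vectors k. Q eps \<sigma>})}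
      = (if S = {} then {\<lambda>_. None} else {})"
  proof -
    have "odd (card {eps\<in>sign_vectors k. Q eps \<sigma>}) \<longleftrightarrow> \<sigma> = (\<lambda>_. None) \<and> S = {}"
      if "\<sigma> \<in> expansion_choices k L" for \<sigma>
    proof -
      have "odd (card {eps\<in>sign_vectors k. Q eps \<sigma>}) \<longleftrightarrow> img \<sigma> = S \<and> (\<forall>i<k. \<sigma> i = None)"
        by (cases "img \<sigma> = S") (simp_all add: Q_def odd_card_sign_vectors_vanishing)
      also have "(\<forall>i<k. \<sigma> i = None) \<longleftrightarrow> \<sigma> = (\<lambda>_. None)"
        using that by (auto simp: expansion_choices_def fun_eq_iff) (meson not_less)
      finally show ?thesis
        by (auto simp: img_def)
    qed
    moreover have "(\<lambda>_. None) \<in> expansion_choices k L"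
      by (simp add: expansion_choices_def)
    ultimately show ?thesis
      by auto
  qed
  finally show ?thesis
    by simp
qed

lemma odd_card_sign_vectors_lin_functional:
  assumes "\<forall>i<k. L i \<subseteq> {..<n}" and "Y {}"
  shows "odd (card {eps\<in>sign_vectors k. lin_functional n k L (\<lambda>i. \<not> eps i) Y})"
proof -
  define M where "M = {S\<in>monomial_index n k. Y S}"
  have fin: "finite M"
    by (rule finite_subset[of _ "Pow {..<n}"]) (auto simp: M_def monomial_index_def)
  have "lin_functional n k L (\<lambda>i. \<not> eps i) Y \<longleftrightarrow> odd (card {S\<in>M. coef k L (\<lambda>i. \<not> eps i) S})" for eps
    unfolding lin_functional_def M_def by (rule arg_cong[where f = "\<lambda>A. odd (card A)"]) auto
  then have "odd (card {eps\<in>sign_vectors k. lin_functional n k L (\<lambda>i. \<not> eps i) Y})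
      \<longleftrightarrow> odd (card {S\<in>M. odd (card {eps\<in>sign_vectors k. coef k L (\<lambda>i. \<not> eps i) S})})"
    using odd_card_filter_odd_card_swap[OF finite_sign_vectors fin] by simp
  also have "{S\<in>M. odd (card {eps\<in>sign_vectors k. coef k L (\<lambda>i. \<not> eps i) S})} = {{}}"
  proof -
    have "\<forall>i<k. finite (L i)"
      using assms(1) finite_subset by blast
    with assms(2) show ?thesis
      by (auto simp: M_def monomial_index_def odd_card_sign_vectors_coef)
  qed
  finally show ?thesis
    by simp
qed

lemma card_Times_Int_le:
  assumes "finite A" "finite B" "\<forall>a\<in>A. \<exists>b\<in>B. (a, b) \<notin> X"
  shows "card ((A \<times> B) \<inter> X) \<le> card A * (card B - 1)"
proof -
  have section_le: "card {b\<in>B. (a, b) \<in> X} \<le> card B - 1" if "a \<in> A" for a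
  proof -
    have "{b\<in>B. (a, b) \<in> X} \<subset> B"
      using assms(3) that by blast
    then have "card {b\<in>B. (a, b) \<in> X} < card B"
      by (rule psubset_card_mono[OF assms(2)])
    then show ?thesis
      by linarith
  qed
  have "(A \<times> B) \<inter> X = Sigma A (\<lambda>a. {b\<in>B. (a, b) \<in> X})"
    by blast
  then have "card ((A \<times> B) \<inter> X) = (\<Sum>a\<in>A. card {b\<in>B. (a, b) \<in> X})"
    using assms(1,2) by simp
  also have "\<dots> \<le> (\<Sum>a\<in>A. card B - 1)"
    using section_le by (rule sum_mono)
  finally show ?thesis
    by simp
qed

lemma measure_pmf_of_set_Times_le:
  assumes "finite A" "finite B" "A \<noteq> {}" "B \<noteq> {}" "\<forall>a\<in>A. \<exists>b\<in>B. (a, b) \<notin> X"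
  shows "measure_pmf.prob (pmf_of_set (A \<times> B)) X \<le> 1 - 1 / card B"
proof -
  have "card A > 0" "card B > 0"
    using assms(1-4) by (simp_all add: card_gt_0_iff)
  have "real (card ((A \<times> B) \<inter> X)) \<le> real (card A * (card B - 1))"
    using card_Times_Int_le[OF assms(1,2,5)] by (simp only: of_nat_le_iff)
  also have "\<dots> = real (card A) * (real (card B) - 1)"
    using \<open>card B > 0\<close> by (simp add: of_nat_diff)
  finally have "real (card ((A \<times> B) \<inter> X)) / real (card (A \<times> B))
      \<le> real (card A) * (real (card B) - 1) / (real (card A) * real (card B))"
    unfolding card_cartesian_product of_nat_mult by (rule divide_right_mono) simp
  also have "\<dots> = 1 - 1 / card B"
    using \<open>card A > 0\<close> \<open>card B > 0\<close> by (simp add: field_simps)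
  finally show ?thesis
    using assms(1-4) by (simp add: measure_pmf_of_set)
qed

definition independent_forms :: "nat \<Rightarrow> nat \<Rightarrow> (nat \<Rightarrow> nat set) set" where
  "independent_forms n k = {L. (\<forall>i<k. L i \<subseteq> {..<n}) \<and> (\<forall>i\<ge>k. L i = {}) \<and> lin_indep_forms n k L}"

lemma flat_data_eq_times: "flat_data n k = independent_forms n k \<times> sign_vectors k"
  by (auto simp: flat_data_def independent_forms_def sign_vectors_def)

lemma finite_independent_forms: "finite (independent_forms n k)"
proof -
  let ?extend = "\<lambda>g i. if i < k then g i else {}"
  have "independent_forms n k \<subseteq> ?extend ` PiE {..<k} (\<lambda>_. Pow {..<n})"
  proof
    fix L assume L: "L \<in> independent_forms n k"
    then have "L = ?extend (restrict L {..<k})"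
      by (auto simp: independent_forms_def fun_eq_iff not_less)
    moreover have "restrict L {..<k} \<in> PiE {..<k} (\<lambda>_. Pow {..<n})"
      using L by (auto simp: independent_forms_def)
    ultimately show "L \<in> ?extend ` PiE {..<k} (\<lambda>_. Pow {..<n})"
      by blast
  qed
  then show ?thesis
    by (rule finite_subset) (auto intro!: finite_PiE)
qed

lemma independent_forms_nonempty:
  assumes "k \<le> n"
  shows "independent_forms n k \<noteq> {}"
proof -
  define L where "L = (\<lambda>i::nat. if i < k then {i} else {})"
  have "lin_indep_forms n k L"
    unfolding lin_indep_forms_def
  proof (intro allI impI)
    fix I assume I: "I \<subseteq> {..<k}" "I \<noteq> {}"
    then obtain i where "i \<in> I"
      by blast
    with I assms have "{j\<in>I. i \<in> L j} = {i}" "i < n"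
      by (auto simp: L_def)
    then show "\<exists>s<n. odd (card {j\<in>I. s \<in> L j})"
      by auto
  qed
  then have "L \<in> independent_forms n k"
    using assms by (auto simp: independent_forms_def L_def)
  then show ?thesis
    by blast
qed

lemma prob_flat_violates_le:
  assumes "k \<le> n" "Y {}"
  shows "measure_pmf.prob (pmf_of_set (flat_data n k))
           {x. \<not> lin_functional n k (fst x) (\<lambda>i. \<not> snd x i) Y} \<le> 1 - 1 / 2 ^ k"
proof -
  have "\<exists>eps\<in>sign_vectors k. lin_functional n k L (\<lambda>i. \<not> eps i) Y" if "L \<in> independent_forms n k" for L
  proof -
    have "\<forall>i<k. L i \<subseteq> {..<n}"
      using that by (simp add: independent_forms_def)
    then have "odd (card {eps\<in>sign_vectors k. lin_functional n k L (\<lambda>i. \<not> eps i) Y})"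
      using assms(2) by (rule odd_card_sign_vectors_lin_functional)
    then have "{eps\<in>sign_vectors k. lin_functional n k L (\<lambda>i. \<not> eps i) Y} \<noteq> {}"
      by (intro notI) simp
    then show ?thesis
      by blast
  qed
  moreover have "sign_vectors k \<noteq> {}"
    using card_sign_vectors[of k] by auto
  ultimately show ?thesis
    using measure_pmf_of_set_Times_le[OF finite_independent_forms finite_sign_vectors
        independent_forms_nonempty[OF assms(1)]]
    by (simp add: flat_data_eq_times card_sign_vectors)
qed

lemma card_monomial_index: "card (monomial_index n k) = Nk n k"
proof -
  have "monomial_index n k = (\<Union>i\<in>{..k}. {S. S \<subseteq> {..<n} \<and> card S = i})"
    by (auto simp: monomial_index_def)
  moreover have "card (\<Union>i\<in>{..k}. {S. S \<subseteq> {..<n} \<and> card S = i})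
      = (\<Sum>i\<le>k. card {S. S \<subseteq> {..<n} \<and> card S = i})"
    by (rule card_UN_disjoint) (auto intro: finite_subset[of _ "Pow {..<n}"])
  ultimately show ?thesis
    by (simp add: Nk_def n_subsets)
qed

lemma lin_functional_restrict:
  "lin_functional n k L \<alpha> (\<lambda>S. S \<in> monomial_index n k \<and> Y S) = lin_functional n k L \<alpha> Y"
  unfolding lin_functional_def by (rule arg_cong[where f = "\<lambda>A. odd (card A)"]) auto

lemma prob_system_solvable_le:
  assumes "k \<le> n"
  shows "measure_pmf.prob (data_pmf n k m) {d. system_solvable n k m d}
           \<le> 2 ^ Nk n k * (1 - 1 / 2 ^ k) ^ m"
proof -
  define M where "M = monomial_index n k"
  define Ts where "Ts = {T\<in>Pow M. {} \<in> T}"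
  define violated where
    "violated = (\<lambda>T. {x. \<not> lin_functional n k (fst x) (\<lambda>i. \<not> snd x i) (\<lambda>S. S \<in> T)})"
  have fin_M: "finite M"
    by (rule finite_subset[of _ "Pow {..<n}"]) (auto simp: M_def monomial_index_def)
  have fin_Ts: "finite Ts"
    using fin_M by (simp add: Ts_def)
  have card_Ts: "card Ts \<le> 2 ^ Nk n k"
  proof -
    have "card Ts \<le> card (Pow M)"
      using fin_M by (intro card_mono) (auto simp: Ts_def)
    then show ?thesis
      using fin_M by (simp add: card_Pow M_def card_monomial_index)
  qed
  have cover: "{d. system_solvable n k m d} \<subseteq> (\<Union>T\<in>Ts. Pi {..<m} (\<lambda>_. violated T))"
  proof
    fix d assume "d \<in> {d. system_solvable n k m d}"
    then obtain Y where Y: "Y {}" "\<forall>j<m. \<not> lin_functional n k (fst (d j)) (\<lambda>i. \<not> snd (d j) i) Y"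
      by (auto simp: system_solvable_def)
    have "(\<lambda>S. S \<in> {S\<in>M. Y S}) = (\<lambda>S. S \<in> monomial_index n k \<and> Y S)"
      by (simp add: M_def)
    then have "d \<in> Pi {..<m} (\<lambda>_. violated {S\<in>M. Y S})"
      using Y(2) by (simp add: violated_def lin_functional_restrict)
    moreover have "{S\<in>M. Y S} \<in> Ts"
      using Y(1) by (auto simp: Ts_def M_def monomial_index_def)
    ultimately show "d \<in> (\<Union>T\<in>Ts. Pi {..<m} (\<lambda>_. violated T))"
      by blast
  qed
  have prob_Pi: "measure_pmf.prob (data_pmf n k m) (Pi {..<m} (\<lambda>_. violated T)) \<le> (1 - 1 / 2 ^ k) ^ m"
    if "T \<in> Ts" for T
  proof -
    have "measure_pmf.prob (data_pmf n k m) (Pi {..<m} (\<lambda>_. violated T))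
        = measure_pmf.prob (pmf_of_set (flat_data n k)) (violated T) ^ m"
      unfolding data_pmf_def by (simp add: measure_Pi_pmf_Pi)
    also have "\<dots> \<le> (1 - 1 / 2 ^ k) ^ m"
      using that assms unfolding violated_def Ts_def
      by (intro power_mono prob_flat_violates_le) auto
    finally show ?thesis .
  qed
  have "measure_pmf.prob (data_pmf n k m) {d. system_solvable n k m d}
      \<le> measure_pmf.prob (data_pmf n k m) (\<Union>T\<in>Ts. Pi {..<m} (\<lambda>_. violated T))"
    using cover by (rule measure_pmf.finite_measure_mono) simp
  also have "\<dots> \<le> (\<Sum>T\<in>Ts. measure_pmf.prob (data_pmf n k m) (Pi {..<m} (\<lambda>_. violated T)))"
    using fin_Ts by (intro measure_pmf.finite_measure_subadditive_finite) auto
  also have "\<dots> \<le> real (card Ts) * (1 - 1 / 2 ^ k) ^ m"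
    using sum_mono[OF prob_Pi] by simp
  also have "\<dots> \<le> 2 ^ Nk n k * (1 - 1 / 2 ^ k) ^ m"
    using card_Ts by (intro mult_right_mono) (simp_all add: numeral_power_le_of_nat_cancel_iff)
  finally show ?thesis .
qed

lemma le_Nk: "1 \<le> k \<Longrightarrow> n \<le> Nk n k"
  using member_le_sum[of 1 "{..k}" "\<lambda>i. n choose i"] by (simp add: Nk_def)

lemma two_powr_mult_power_le_exp:
  fixes q \<Delta> N :: real
  assumes "0 < q" "q < 1" "\<Delta> * N \<le> real m"
  shows "2 powr N * q ^ m \<le> exp ((ln 2 + \<Delta> * ln q) * N)"
proof -
  have "q ^ m = q powr real m"
    using assms(1) by (simp add: powr_realpow)
  also have "\<dots> \<le> q powr (\<Delta> * N)"
    using assms by (intro powr_mono') auto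
  finally have "2 powr N * q ^ m \<le> 2 powr N * q powr (\<Delta> * N)"
    by (simp add: mult_left_mono)
  also have "\<dots> = exp ((ln 2 + \<Delta> * ln q) * N)"
    using assms(1) by (simp add: powr_def algebra_simps exp_add)
  finally show ?thesis .
qed

lemma threshold_exponent_neg:
  assumes "1 \<le> k" "\<Delta> > ln (1/2) / ln (1 - 2 powr - real k)"
  shows "ln 2 + \<Delta> * ln (1 - 1 / 2 ^ k) < 0"
proof -
  have "(2::real) ^ k \<ge> 2"
    using assms(1) by (metis power_increasing power_one_right zero_less_numeral less_imp_le one_le_numeral)
  then have "ln (1 - 1 / 2 ^ k :: real) < 0"
    by (simp add: field_simps)
  moreover have "2 powr - real k = 1 / 2 ^ k"
    by (simp add: powr_minus powr_realpow divide_inverse)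
  ultimately have "\<Delta> * ln (1 - 1 / 2 ^ k) < ln (1/2)"
    using assms(2) by (simp add: divide_less_eq mult.commute)
  then show ?thesis
    by (simp add: ln_div)
qed

lemma prob_system_solvable_le_exp:
  assumes "1 \<le> k" "k \<le> n" and exponent: "ln 2 + \<Delta> * ln (1 - 1 / 2 ^ k) \<le> 0"
  shows "measure_pmf.prob (data_pmf n k (nat \<lceil>\<Delta> * real (Nk n k)\<rceil>))
           {d. system_solvable n k (nat \<lceil>\<Delta> * real (Nk n k)\<rceil>) d}
         \<le> exp (ln 2 + \<Delta> * ln (1 - 1 / 2 ^ k)) ^ n"
proof -
  define q :: real where "q = 1 - 1 / 2 ^ k"
  define c where "c = ln 2 + \<Delta> * ln q"
  define N where "N = real (Nk n k)"
  define m where "m = nat \<lceil>\<Delta> * N\<rceil>"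
  have q: "0 < q" "q < 1"
    using assms(1) by (auto simp: q_def field_simps intro: one_less_power)
  have "measure_pmf.prob (data_pmf n k m) {d. system_solvable n k m d} \<le> 2 ^ Nk n k * q ^ m"
    unfolding q_def using assms(2) by (rule prob_system_solvable_le)
  also have "\<dots> = 2 powr N * q ^ m"
    by (simp add: N_def powr_realpow)
  also have "\<dots> \<le> exp (c * N)"
    unfolding c_def using q by (rule two_powr_mult_power_le_exp) (simp add: m_def real_nat_ceiling_ge)
  also have "\<dots> \<le> exp (c * real n)"
    using le_Nk[OF assms(1), of n] exponent by (simp add: c_def q_def N_def mult_left_mono_neg)
  also have "\<dots> = exp c ^ n"
    by (simp add: mult.commute flip: exp_of_nat_mult)
  finally show ?thesis
    by (simp add: c_def q_def m_def N_def)
qed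

theorem mainTheorem7:
  fixes k :: nat and \<Delta> :: real
  assumes "k \<ge> 1"
    and "\<Delta> > ln (1/2) / ln (1 - 2 powr (- real k))"
  shows "(\<lambda>n. measure_pmf.prob (data_pmf n k (nat \<lceil>\<Delta> * real (Nk n k)\<rceil>))
                {d. system_solvable n k (nat \<lceil>\<Delta> * real (Nk n k)\<rceil>) d})
         \<longlonglongrightarrow> 0"
proof (rule tendsto_sandwich[OF _ _ tendsto_const])
  define c where "c = ln 2 + \<Delta> * ln (1 - 1 / 2 ^ k)"
  have "c < 0"
    unfolding c_def using assms by (rule threshold_exponent_neg)
  then show "(\<lambda>n. exp c ^ n) \<longlonglongrightarrow> 0"
    by (intro LIMSEQ_power_zero) simp
  show "\<forall>\<^sub>F n in sequentially. measure_pmf.prob (data_pmf n k (nat \<lceil>\<Delta> * real (Nk n k)\<rceil>))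
      {d. system_solvable n k (nat \<lceil>\<Delta> * real (Nk n k)\<rceil>) d} \<le> exp c ^ n"
    using \<open>c < 0\<close> assms(1) unfolding c_def
    by (intro eventually_sequentiallyI[of k] prob_system_solvable_le_exp) auto
qed simp

end
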